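(* In the Shepp--Olkin setting with $p_i'\ge0$ for all $i$ and $v=\sum_ip_i'>0$, for every $t$ and every $k\in\{0,\ldots,n-1\}$ with $f_k(t)>0$ and $f_{k+1}(t)>0$, the coefficients $$\alpha_k(t)=\frac{\sum_{i=1}^np_i'p_i(t)f_{k-1}^{(i)}(t)}{vf_k(t)}$$ satisfy $\alpha_k(t)\le\alpha_{k+1}(t)$.
   Context: Shepp--Olkin setting: $p_1,\ldots,p_n:[0,1]\to[0,1]$ are affine functions with constant derivatives $p_i'$. $f_k(t)$, $k=0,\ldots,n$, is the probability mass function of a sum of independent Bernoulli variables with parameters $p_1(t),\ldots,p_n(t)$; $f^{(i)}_k(t)$ is the mass function of the sum omitting the $i$-th variable (extended by $0$ outside $\{0,\ldots,n-1\}$). *)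

theory Defs
  imports Complex_Main
begin

text \<open>The index k is an integer,
  so the function is automatically 0 outside {0..card I}.\<close>
definition pb_pmf :: "nat set \<Rightarrow> (nat \<Rightarrow> real) \<Rightarrow> int \<Rightarrow> real" where
  "pb_pmf I q k = (\<Sum>S\<in>{S. S \<subseteq> I \<and> int (card S) = k}.
      (\<Prod>i\<in>S. q i) * (\<Prod>i\<in>I - S. 1 - q i))"

text \<open>Shepp--Olkin: variables indexed by 0..n-1 (paper: 1..n).\<close>
definition SO_f :: "nat \<Rightarrow> (nat \<Rightarrow> real \<Rightarrow> real) \<Rightarrow> real \<Rightarrow> int \<Rightarrow> real" where
  "SO_f n p t k = pb_pmf {..<n} (\<lambda>i. p i t) k"

definition SO_fi :: "nat \<Rightarrow> (nat \<Rightarrow> real \<Rightarrow> real) \<Rightarrow> nat \<Rightarrow> real \<Rightarrow> int \<Rightarrow> real" where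
  "SO_fi n p i t k = pb_pmf ({..<n} - {i}) (\<lambda>j. p j t) k"

definition SO_alpha :: "nat \<Rightarrow> (nat \<Rightarrow> real \<Rightarrow> real) \<Rightarrow> (nat \<Rightarrow> real) \<Rightarrow> real \<Rightarrow> int \<Rightarrow> real" where
  "SO_alpha n p p' t k =
     (\<Sum>i<n. p' i * p i t * SO_fi n p i t (k - 1)) / ((\<Sum>i<n. p' i) * SO_f n p t k)"

end

theory Submission
  imports Defs
begin

text \<open>Singling out the i-th variable gives f_k = p_i g_(k-1) + (1 - p_i) g_k with
  g = f^(i). Poisson-binomial laws satisfy the PF2 inequality g_(a-1) g_(b+1) \<le> g_a g_b
  for a \<le> b, since it survives mixing with a Bernoulli variable; for a = b this is
  log-concavity of g, which gives g_(k-1) f_(k+1) \<le> g_k f_k. Weighting by p_i' p_i \<ge> 0 and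
  summing over i yields the claim after clearing the positive denominators. Only
  p_i(t) \<in> [0,1] and p_i' \<ge> 0 are needed.\<close>

definition pf2 :: "(int \<Rightarrow> real) \<Rightarrow> bool" where
  "pf2 a \<longleftrightarrow> (\<forall>i j. i \<le> j \<longrightarrow> a (i - 1) * a (j + 1) \<le> a i * a j)"

lemma pf2_bernoulli_mix:
  assumes "pf2 a" and "0 \<le> r" "r \<le> 1"
  shows "pf2 (\<lambda>m. r * a (m - 1) + (1 - r) * a m)"
  unfolding pf2_def
proof (intro allI impI)
  fix i j :: int assume ij: "i \<le> j"
  have PF: "\<And>i j. i \<le> j \<Longrightarrow> a (i - 1) * a (j + 1) \<le> a i * a j"
    using assms(1) unfolding pf2_def by blast
  have X: "a (i - 2) * a j \<le> a (i - 1) * a (j - 1)"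
    using PF[of "i - 1" "j - 1"] ij by (simp add: algebra_simps)
  have Y: "a (i - 1) * a (j + 1) \<le> a i * a j"
    using PF[of i j] ij by simp
  have Z: "a (i - 2) * a (j + 1) \<le> a i * a (j - 1)"
  proof (cases "i < j")
    case True
    have "a (i - 2) * a (j + 1) \<le> a (i - 1) * a j"
      using PF[of "i - 1" j] ij by (simp add: algebra_simps)
    also have "\<dots> \<le> a i * a (j - 1)"
      using PF[of i "j - 1"] True by simp
    finally show ?thesis .
  next
    case False
    then show ?thesis using ij PF[of "i - 1" i] by (simp add: algebra_simps)
  qed
  have "(r * a (i - 1) + (1 - r) * a i) * (r * a (j - 1) + (1 - r) * a j)
      - (r * a (i - 2) + (1 - r) * a (i - 1)) * (r * a j + (1 - r) * a (j + 1))
      = r * r * (a (i - 1) * a (j - 1) - a (i - 2) * a j)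
        + (1 - r) * (1 - r) * (a i * a j - a (i - 1) * a (j + 1))
        + r * (1 - r) * (a i * a (j - 1) - a (i - 2) * a (j + 1))"
    by (simp add: algebra_simps)
  also have "\<dots> \<ge> 0"
    using X Y Z assms(2,3) by (intro add_nonneg_nonneg mult_nonneg_nonneg) auto
  finally have "(r * a (i - 2) + (1 - r) * a (i - 1)) * (r * a j + (1 - r) * a (j + 1))
      \<le> (r * a (i - 1) + (1 - r) * a i) * (r * a (j - 1) + (1 - r) * a j)"
    by linarith
  then show "(r * a (i - 1 - 1) + (1 - r) * a (i - 1)) * (r * a (j + 1 - 1) + (1 - r) * a (j + 1))
      \<le> (r * a (i - 1) + (1 - r) * a i) * (r * a (j - 1) + (1 - r) * a j)"
    by (simp add: diff_diff_eq)
qed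

lemma pf2_log_concave: "pf2 a \<Longrightarrow> a (k - 1) * a (k + 1) \<le> a k * a k"
  unfolding pf2_def by blast

lemma log_concave_mix_shift:
  fixes g f :: "int \<Rightarrow> real"
  assumes lc: "g (k - 1) * g (k + 1) \<le> g k * g k"
    and r: "r \<le> 1"
    and f: "\<And>m. f m = r * g (m - 1) + (1 - r) * g m"
  shows "g (k - 1) * f (k + 1) \<le> g k * f k"
proof -
  have "g k * f k - g (k - 1) * f (k + 1) = (1 - r) * (g k * g k - g (k - 1) * g (k + 1))"
    unfolding f[of k] f[of "k + 1"] by (simp add: algebra_simps)
  also have "\<dots> \<ge> 0"
    using lc r by simp
  finally show ?thesis by linarith
qed

lemma pb_pmf_empty: "pb_pmf {} q k = (if k = 0 then 1 else 0)"
proof -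
  have "{S. S \<subseteq> {} \<and> int (card S) = k} = (if k = 0 then {{}} else {})" (is "?A = _")
    by auto
  show ?thesis unfolding pb_pmf_def \<open>?A = _\<close> by simp
qed

lemma pb_pmf_insert:
  assumes fin: "finite I" and xI: "x \<notin> I"
  shows "pb_pmf (insert x I) q k = q x * pb_pmf I q (k - 1) + (1 - q x) * pb_pmf I q k"
proof -
  define w where "w J S = (\<Prod>i\<in>S. q i) * (\<Prod>i\<in>J - S. 1 - q i)" for J S
  let ?A = "{S. S \<subseteq> I \<and> int (card S) = k}"
  let ?B = "{S. S \<subseteq> I \<and> int (card S) = k - 1}"
  have fin_subsets: "finite {S. S \<subseteq> I \<and> P S}" for P
    by (rule finite_subset[of _ "Pow I"]) (auto simp: fin)
  have split: "{S. S \<subseteq> insert x I \<and> int (card S) = k} = ?A \<union> insert x ` ?B"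
  proof (intro set_eqI iffI)
    fix S assume S: "S \<in> {S. S \<subseteq> insert x I \<and> int (card S) = k}"
    then have "finite S" using fin finite_subset by auto
    show "S \<in> ?A \<union> insert x ` ?B"
    proof (cases "x \<in> S")
      case True
      then have "S = insert x (S - {x})" "S - {x} \<in> ?B"
        using S \<open>finite S\<close> card_gt_0_iff[of S] by (auto simp: card_Diff_singleton of_nat_diff)
      then show ?thesis by blast
    qed (use S in auto)
  next
    fix S assume "S \<in> ?A \<union> insert x ` ?B"
    then show "S \<in> {S. S \<subseteq> insert x I \<and> int (card S) = k}"
    proof
      assume "S \<in> insert x ` ?B"
      then obtain T where T: "T \<subseteq> I" "int (card T) = k - 1" "S = insert x T" by auto
      then have "finite T" "x \<notin> T" using fin xI finite_subset by auto
      then show ?thesis using T by auto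
    qed auto
  qed
  have inj: "inj_on (insert x) ?B"
    using xI by (intro inj_onI) (metis Diff_insert_absorb mem_Collect_eq subsetD)
  have sum_A: "(\<Sum>S\<in>?A. w (insert x I) S) = (1 - q x) * pb_pmf I q k"
    unfolding pb_pmf_def sum_distrib_left
  proof (rule sum.cong[OF refl])
    fix S assume "S \<in> ?A"
    then have "insert x I - S = insert x (I - S)" "x \<notin> I - S" using xI by auto
    then show "w (insert x I) S = (1 - q x) * ((\<Prod>i\<in>S. q i) * (\<Prod>i\<in>I - S. 1 - q i))"
      unfolding w_def using fin by simp
  qed
  have sum_B: "(\<Sum>S\<in>insert x ` ?B. w (insert x I) S) = q x * pb_pmf I q (k - 1)"
    unfolding pb_pmf_def sum_distrib_left sum.reindex[OF inj] o_def
  proof (rule sum.cong[OF refl])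
    fix T assume T: "T \<in> ?B"
    then have "insert x I - insert x T = I - T" "x \<notin> T" "finite T"
      using xI fin finite_subset by auto
    then show "w (insert x I) (insert x T) = q x * ((\<Prod>i\<in>T. q i) * (\<Prod>i\<in>I - T. 1 - q i))"
      unfolding w_def by simp
  qed
  have "pb_pmf (insert x I) q k = (\<Sum>S\<in>?A \<union> insert x ` ?B. w (insert x I) S)"
    unfolding pb_pmf_def split w_def ..
  also have "\<dots> = (1 - q x) * pb_pmf I q k + q x * pb_pmf I q (k - 1)"
    using xI by (subst sum.union_disjoint) (auto simp: fin_subsets sum_A sum_B)
  finally show ?thesis by simp
qed

lemma pf2_pb_pmf:
  assumes "finite I" "\<forall>i\<in>I. 0 \<le> q i \<and> q i \<le> 1"
  shows "pf2 (pb_pmf I q)"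
  using assms
proof (induction I rule: finite_induct)
  case empty
  show ?case unfolding pf2_def by (simp add: pb_pmf_empty)
next
  case (insert x F)
  have "pf2 (\<lambda>m. q x * pb_pmf F q (m - 1) + (1 - q x) * pb_pmf F q m)"
    using insert by (intro pf2_bernoulli_mix) auto
  then show ?case by (simp add: pb_pmf_insert[OF insert.hyps])
qed

lemma SO_f_split:
  assumes "i < n"
  shows "SO_f n p t m = p i t * SO_fi n p i t (m - 1) + (1 - p i t) * SO_fi n p i t m"
proof -
  have "{..<n} = insert i ({..<n} - {i})" using assms by auto
  then show ?thesis unfolding SO_f_def SO_fi_def by (metis finite_Diff finite_lessThan
        pb_pmf_insert Diff_iff singletonI)
qed

lemma SO_fi_shift_le:
  assumes i: "i < n" and range: "\<forall>j<n. p j t \<in> {0..1}"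
  shows "SO_fi n p i t (k - 1) * SO_f n p t (k + 1) \<le> SO_fi n p i t k * SO_f n p t k"
proof (rule log_concave_mix_shift)
  have "pf2 (SO_fi n p i t)"
    unfolding SO_fi_def using range by (intro pf2_pb_pmf) auto
  then show "SO_fi n p i t (k - 1) * SO_fi n p i t (k + 1) \<le> SO_fi n p i t k * SO_fi n p i t k"
    by (rule pf2_log_concave)
  show "p i t \<le> 1" using range i by auto
qed (rule SO_f_split[OF i])

theorem proposition5p2:
  fixes n :: nat and p :: "nat \<Rightarrow> real \<Rightarrow> real" and p' :: "nat \<Rightarrow> real"
    and t :: real and k :: nat
  assumes affine: "\<forall>i<n. \<forall>s\<in>{0..1}. p i s = p i 0 + p' i * s"
    and range: "\<forall>i<n. \<forall>s\<in>{0..1}. p i s \<in> {0..1}"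
    and deriv_nonneg: "\<forall>i<n. p' i \<ge> 0"
    and v_pos: "(\<Sum>i<n. p' i) > 0"
    and t: "t \<in> {0..1}"
    and k: "k < n"
    and fk_pos: "SO_f n p t (int k) > 0"
    and fk1_pos: "SO_f n p t (int k + 1) > 0"
  shows "SO_alpha n p p' t (int k) \<le> SO_alpha n p p' t (int k + 1)"
proof -
  have range_t: "\<forall>i<n. p i t \<in> {0..1}" using range t by blast
  have "(\<Sum>i<n. p' i * p i t * SO_fi n p i t (int k - 1)) * SO_f n p t (int k + 1)
      \<le> (\<Sum>i<n. p' i * p i t * SO_fi n p i t (int k)) * SO_f n p t (int k)"
    unfolding sum_distrib_right
  proof (rule sum_mono)
    fix i assume "i \<in> {..<n}"
    then have i: "i < n" and w: "0 \<le> p' i * p i t" using deriv_nonneg range_t by auto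
    from mult_left_mono[OF SO_fi_shift_le[of i n p t "int k", OF i range_t] w]
    show "p' i * p i t * SO_fi n p i t (int k - 1) * SO_f n p t (int k + 1)
        \<le> p' i * p i t * SO_fi n p i t (int k) * SO_f n p t (int k)"
      by (simp add: mult.assoc)
  qed
  then show ?thesis
    using v_pos fk_pos fk1_pos unfolding SO_alpha_def by (simp add: divide_simps algebra_simps)
qed

end
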